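(* Let $F_1,\dots,F_k$ be $d\times d$ positive semidefinite matrices with $\sum_{j=1}^kF_j\preceq\mathbb{I}$, let $\lambda\in\mathbb{R}^k$, and let $\ell(\lambda\cdot F)=\operatorname{tr}\exp(\lambda\cdot F)$. Define the $k\times k$ matrices $$\Delta=\sum_j\frac{\partial\ell(\lambda\cdot F)}{\partial\lambda_j}|j\rangle\langle j|,\qquad \Lambda=\sum_{j,j'}\frac{\partial^2\ell(\lambda\cdot F)}{\partial\lambda_j\,\partial\lambda_{j'}}|j\rangle\langle j'|.$$ Then $\Lambda\preceq\Delta$.
   Context: $\lambda\cdot F=\sum_j\lambda_jF_j$. $A\preceq B$ means $B-A$ is positive semidefinite. *)

theory Defs
  imports "HOL-Analysis.Analysis"
begin

definition cquad :: "complex^'d^'d \<Rightarrow> complex^'d \<Rightarrow> complex" where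
  "cquad A x = (\<Sum>i\<in>UNIV. cnj (x $ i) * (A *v x) $ i)"

text \<open>Positive semidefinite (complex): x* A x is a nonnegative real for every x
  (this forces A to be Hermitian).\<close>
definition cpsd :: "complex^'d^'d \<Rightarrow> bool" where
  "cpsd A \<longleftrightarrow> (\<forall>x. cquad A x \<in> \<real> \<and> 0 \<le> Re (cquad A x))"

definition cloewner_le :: "complex^'d^'d \<Rightarrow> complex^'d^'d \<Rightarrow> bool" where
  "cloewner_le A B \<longleftrightarrow> cpsd (B - A)"

definition rpsd :: "real^'k^'k \<Rightarrow> bool" where
  "rpsd M \<longleftrightarrow> transpose M = M \<and> (\<forall>x. 0 \<le> x \<bullet> (M *v x))"

definition rloewner_le :: "real^'k^'k \<Rightarrow> real^'k^'k \<Rightarrow> bool" where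
  "rloewner_le A B \<longleftrightarrow> rpsd (B - A)"

definition mpow :: "complex^'d^'d \<Rightarrow> nat \<Rightarrow> complex^'d^'d" where
  "mpow A n = (((**) A) ^^ n) (mat 1)"

definition mexp :: "complex^'d^'d \<Rightarrow> complex^'d^'d" where
  "mexp A = (\<Sum>n. (1 / fact n) *\<^sub>R mpow A n)"

definition mtrace :: "complex^'d^'d \<Rightarrow> complex" where
  "mtrace A = (\<Sum>i\<in>UNIV. A $ i $ i)"

definition lin_comb :: "real^'k \<Rightarrow> ('k \<Rightarrow> complex^'d^'d) \<Rightarrow> complex^'d^'d" where
  "lin_comb lam F = (\<Sum>j\<in>UNIV. (lam $ j) *\<^sub>R F j)"

text \<open>ell(lambda . F) = tr exp(lambda . F), real-valued since lambda . F is Hermitian.\<close>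
definition ell :: "('k \<Rightarrow> complex^'d^'d) \<Rightarrow> real^'k \<Rightarrow> real" where
  "ell F lam = Re (mtrace (mexp (lin_comb lam F)))"

definition pderiv_coord :: "(real^'k \<Rightarrow> real) \<Rightarrow> 'k \<Rightarrow> real^'k \<Rightarrow> real" where
  "pderiv_coord g j lam = deriv (\<lambda>t. g (lam + t *\<^sub>R axis j 1)) 0"

definition Delta_mat :: "('k \<Rightarrow> complex^'d^'d) \<Rightarrow> real^'k \<Rightarrow> real^'k^'k" where
  "Delta_mat F lam = (\<chi> i j. if i = j then pderiv_coord (ell F) j lam else 0)"

definition Lambda_mat :: "('k \<Rightarrow> complex^'d^'d) \<Rightarrow> real^'k \<Rightarrow> real^'k^'k" where
  "Lambda_mat F lam = (\<chi> i j. pderiv_coord (pderiv_coord (ell F) j) i lam)"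

end

theory Submission
  imports Defs
begin

text \<open>
  Write \<open>H = \<lambda>\<cdot>F = \<Sum>\<^sub>\<alpha> h\<^sub>\<alpha> |\<alpha>\<rangle>\<langle>\<alpha>|\<close>. Differentiating the power series of \<open>exp\<close> gives
  \<open>\<partial>\<^sub>j ell = tr (F\<^sub>j exp H)\<close> and
  \<open>\<partial>\<^sub>i \<partial>\<^sub>j ell = \<Sum>\<^sub>\<alpha>\<^sub>\<beta> \<langle>\<beta>|F\<^sub>i|\<alpha>\<rangle>\<^sup>* \<langle>\<beta>|F\<^sub>j|\<alpha>\<rangle> K h\<^sub>\<beta> h\<^sub>\<alpha>\<close>, where
  \<open>K p q = (exp p - exp q) / (p - q)\<close> is the divided difference of \<open>exp\<close>.
  So for \<open>x \<in> \<real>\<^sup>k\<close> and \<open>X = x\<cdot>F\<close> we get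
  \<open>x\<^sup>T \<Lambda> x = \<Sum>\<^sub>\<alpha>\<^sub>\<beta> |\<langle>\<beta>|X|\<alpha>\<rangle>|\<^sup>2 K h\<^sub>\<beta> h\<^sub>\<alpha>\<close>. Since \<open>K p q \<le> (exp p + exp q) / 2\<close> and the
  weights are symmetric in \<open>\<alpha>, \<beta>\<close>, this is at most \<open>\<Sum>\<^sub>\<alpha> exp h\<^sub>\<alpha> \<parallel>X \<alpha>\<parallel>\<^sup>2\<close>. Finally the operator
  inequality \<open>X\<^sup>2 \<preceq> \<Sum>\<^sub>j x\<^sub>j\<^sup>2 F\<^sub>j\<close>, a Cauchy-Schwarz argument using \<open>F\<^sub>j \<succeq> 0\<close> and
  \<open>\<Sum>\<^sub>j F\<^sub>j \<preceq> 1\<close>, bounds this by \<open>\<Sum>\<^sub>\<alpha> exp h\<^sub>\<alpha> \<Sum>\<^sub>j x\<^sub>j\<^sup>2 \<langle>\<alpha>|F\<^sub>j|\<alpha>\<rangle> = x\<^sup>T \<Delta> x\<close>.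
\<close>

section \<open>Complex inner product and Hermitian matrices\<close>

definition cinner :: "complex^'d \<Rightarrow> complex^'d \<Rightarrow> complex" where
  "cinner x y = (\<Sum>i\<in>UNIV. cnj (x $ i) * y $ i)"

definition hermitian :: "complex^'d^'d \<Rightarrow> bool" where
  "hermitian A \<longleftrightarrow> (\<forall>i j. A $ i $ j = cnj (A $ j $ i))"

lemma cquad_eq_cinner: "cquad A x = cinner x (A *v x)"
  by (simp add: cquad_def cinner_def)

lemma cinner_zero_right [simp]: "cinner x 0 = 0"
  by (simp add: cinner_def)

lemma cinner_add_left: "cinner (x + y) z = cinner x z + cinner y z"
  by (simp add: cinner_def distrib_right sum.distrib)

lemma cinner_add_right: "cinner x (y + z) = cinner x y + cinner x z"
  by (simp add: cinner_def distrib_left sum.distrib)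

lemma cinner_diff_right: "cinner x (y - z) = cinner x y - cinner x z"
  by (simp add: cinner_def right_diff_distrib sum_subtractf)

lemma cinner_smult_left: "cinner (c *s x) y = cnj c * cinner x y"
  by (simp add: cinner_def sum_distrib_left mult.assoc mult.left_commute)

lemma cinner_smult_right: "cinner x (c *s y) = c * cinner x y"
  by (simp add: cinner_def sum_distrib_left mult.assoc mult.left_commute)

lemma cinner_scaleR_left: "cinner (c *\<^sub>R x) y = of_real c * cinner x y"
  unfolding cinner_def sum_distrib_left vector_scaleR_component
  by (intro sum.cong refl) (simp add: scaleR_conv_of_real)

lemma cinner_scaleR_right: "cinner x (c *\<^sub>R y) = of_real c * cinner x y"
  unfolding cinner_def sum_distrib_left vector_scaleR_component
  by (intro sum.cong refl) (simp add: scaleR_conv_of_real)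

lemma cinner_sum_right: "cinner x (sum f S) = (\<Sum>s\<in>S. cinner x (f s))"
  unfolding cinner_def sum_component sum_distrib_left by (rule sum.swap)

lemma cnj_cinner: "cnj (cinner x y) = cinner y x"
  by (simp add: cinner_def mult.commute)

lemma norm_vec_power2: "(norm x)\<^sup>2 = (\<Sum>i\<in>UNIV. (norm (x $ i))\<^sup>2)"
  by (simp add: norm_vec_def L2_set_def sum_nonneg)

lemma cinner_self: "cinner x x = of_real ((norm x)\<^sup>2)"
proof -
  have "cinner x x = (\<Sum>i\<in>UNIV. of_real ((cmod (x $ i))\<^sup>2))"
    unfolding cinner_def by (intro sum.cong refl) (metis complex_norm_square mult.commute)
  also have "\<dots> = of_real ((norm x)\<^sup>2)"
    by (simp add: norm_vec_power2)
  finally show ?thesis .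
qed

lemma scaleR_vec_eq_smult: "r *\<^sub>R (x::complex^'d) = of_real r *s x"
  unfolding vec_eq_iff vector_scaleR_component by (simp add: scaleR_conv_of_real)

lemma cinner_axis_left: "cinner (axis i 1) y = y $ i"
  by (simp add: cinner_def axis_def if_distrib if_distribR cong: if_cong)

lemma matrix_vector_mult_axis: "(A *v axis j 1) $ i = (A::complex^'d^'d) $ i $ j"
  by (simp add: matrix_vector_mult_def axis_def if_distrib if_distribR cong: if_cong)

lemma matrix_vector_mult_scaleR_complex: "(A::complex^'d^'d) *v (c *\<^sub>R x) = c *\<^sub>R (A *v x)"
  unfolding vec_eq_iff matrix_vector_mult_def vector_scaleR_component
  by (simp add: scaleR_sum_right)

lemma matrix_scaleR_vector_mult: "(c *\<^sub>R (A::complex^'d^'d)) *v x = c *\<^sub>R (A *v x)"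
  unfolding vec_eq_iff matrix_vector_mult_def vector_scaleR_component
  by (simp add: scaleR_sum_right)

lemma sum_matrix_vector_mult: "sum f S *v x = (\<Sum>s\<in>S. f s *v (x::complex^'d))"
  by (induction S rule: infinite_finite_induct) (simp_all add: matrix_vector_mult_add_rdistrib)

lemma bounded_linear_matrix_vector_mult_left: "bounded_linear (\<lambda>A::complex^'d^'d. A *v x)"
  unfolding linear_conv_bounded_linear[symmetric]
  by (rule linearI) (simp_all add: matrix_vector_mult_add_rdistrib matrix_scaleR_vector_mult)

lemma hermitian_cinner:
  assumes "hermitian A"
  shows "cinner x (A *v y) = cinner (A *v x) y"
proof -
  have "cinner x (A *v y) = (\<Sum>i\<in>UNIV. \<Sum>j\<in>UNIV. cnj (x $ i) * A $ i $ j * y $ j)"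
    by (simp add: cinner_def matrix_vector_mult_def sum_distrib_left mult.assoc)
  also have "\<dots> = (\<Sum>j\<in>UNIV. \<Sum>i\<in>UNIV. cnj (x $ i) * A $ i $ j * y $ j)"
    by (rule sum.swap)
  also have "\<dots> = (\<Sum>j\<in>UNIV. (\<Sum>i\<in>UNIV. cnj (A $ j $ i * x $ i)) * y $ j)"
    using assms unfolding hermitian_def sum_distrib_right
    by (intro sum.cong refl) (metis complex_cnj_cnj complex_cnj_mult mult.commute)
  also have "\<dots> = cinner (A *v x) y"
    by (simp add: cinner_def matrix_vector_mult_def)
  finally show ?thesis .
qed

lemma hermitian_lin_comb:
  assumes "\<And>j. hermitian (F j)"
  shows "hermitian (lin_comb x F)"
  unfolding hermitian_def
proof (intro allI)
  fix i j
  have "lin_comb x F $ i $ j = (\<Sum>k\<in>UNIV. x $ k *\<^sub>R F k $ i $ j)"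
    unfolding lin_comb_def by simp
  also have "\<dots> = (\<Sum>k\<in>UNIV. x $ k *\<^sub>R cnj (F k $ j $ i))"
    using assms unfolding hermitian_def by (intro sum.cong refl) metis
  also have "\<dots> = cnj (lin_comb x F $ j $ i)"
    unfolding lin_comb_def by simp
  finally show "lin_comb x F $ i $ j = cnj (lin_comb x F $ j $ i)" .
qed

lemma cpsd_imp_hermitian:
  assumes "cpsd A"
  shows "hermitian A"
  unfolding hermitian_def
proof (intro allI)
  fix i j
  have real: "Im (cinner x (A *v x)) = 0" for x
    using assms by (simp add: cpsd_def cquad_eq_cinner complex_is_Real_iff)
  have entry: "cinner (axis i 1) (A *v axis j 1) = A $ i $ j" for i j
    by (simp add: cinner_axis_left matrix_vector_mult_axis)
  have "cinner (axis i 1 + axis j 1) (A *v (axis i 1 + axis j 1)) =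
      A $ i $ i + A $ j $ j + A $ i $ j + A $ j $ i"
    by (simp add: matrix_vector_right_distrib cinner_add_left cinner_add_right entry)
  moreover have "cinner (axis i 1 + \<i> *s axis j 1) (A *v (axis i 1 + \<i> *s axis j 1)) =
      A $ i $ i + A $ j $ j + \<i> * A $ i $ j - \<i> * A $ j $ i"
    by (simp add: matrix_vector_right_distrib vector_scalar_commute cinner_add_left
        cinner_add_right cinner_smult_left cinner_smult_right entry ring_distribs)
  ultimately show "A $ i $ j = cnj (A $ j $ i)"
    using real[of "axis i 1 + axis j 1"] real[of "axis i 1 + \<i> *s axis j 1"]
      real[of "axis i 1"] real[of "axis j 1"]
    by (simp add: entry complex_eq_iff)
qed

section \<open>Spectral theorem for Hermitian matrices\<close>

definition csubspace :: "(complex^'d) set \<Rightarrow> bool" where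
  "csubspace S \<longleftrightarrow> subspace S \<and> (\<forall>v\<in>S. \<i> *s v \<in> S)"

lemma csubspace_smult:
  assumes "csubspace S" "v \<in> S"
  shows "c *s v \<in> S"
proof -
  have "c *s v = Re c *\<^sub>R v + Im c *\<^sub>R (\<i> *s v)"
    unfolding vec_eq_iff by (simp add: complex_eq_iff)
  also have "\<dots> \<in> S"
    using assms unfolding csubspace_def by (intro subspace_add subspace_scale) auto
  finally show ?thesis .
qed

lemma linear_coeff_eq_0_if_quadratic_nonpos:
  fixes a b :: real
  assumes "\<And>t. 2 * t * a + t\<^sup>2 * b \<le> 0"
  shows "a = 0"
proof -
  define p where "p = 1 + \<bar>b\<bar>"
  have "p > 0" unfolding p_def by simp
  have "(2 * (a / p) * a + (a / p)\<^sup>2 * b) * p\<^sup>2 \<le> 0"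
    using assms[of "a / p"] by (simp add: mult_nonpos_nonneg)
  also have "(2 * (a / p) * a + (a / p)\<^sup>2 * b) * p\<^sup>2 = a\<^sup>2 * (2 * p + b)"
    using \<open>p > 0\<close> by (simp add: field_simps power2_eq_square)
  finally have "a\<^sup>2 * (2 * p + b) \<le> 0" .
  moreover have "2 * p + b > 0" by (simp add: p_def abs_if)
  ultimately have "a\<^sup>2 \<le> 0" by (simp add: mult_le_0_iff)
  then show ?thesis by simp
qed

lemma rayleigh_quotient_attains_max:
  fixes H :: "complex^'d^'d"
  assumes "subspace S" "v \<in> S" "v \<noteq> 0"
  obtains v0 where "v0 \<in> S" "norm v0 = 1"
    "\<And>w. w \<in> S \<Longrightarrow> Re (cinner w (H *v w)) \<le> Re (cinner v0 (H *v v0)) * (norm w)\<^sup>2"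
proof -
  define f where "f w = Re (cinner w (H *v w))" for w
  define T where "T = S \<inter> sphere 0 1"
  have "compact T"
    unfolding T_def using compact_Int_closed[OF compact_sphere closed_subspace[OF assms(1)], of 0 1]
    by (simp add: Int_commute)
  moreover have "(1 / norm v) *\<^sub>R v \<in> T"
    using assms unfolding T_def by (simp add: subspace_scale)
  then have "T \<noteq> {}" by blast
  moreover have "continuous_on T f"
    unfolding f_def cinner_def matrix_vector_mult_def by (intro continuous_intros)
  ultimately obtain v0 where v0: "v0 \<in> T" and max: "\<And>w. w \<in> T \<Longrightarrow> f w \<le> f v0"
    using continuous_attains_sup[of T f] by blast
  have scale: "f (c *\<^sub>R w) = c\<^sup>2 * f w" for c w
    unfolding f_def matrix_vector_mult_scaleR_complex cinner_scaleR_left cinner_scaleR_right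
    by (simp add: power2_eq_square)
  have "f w \<le> f v0 * (norm w)\<^sup>2" if "w \<in> S" for w
  proof (cases "w = 0")
    case True
    then show ?thesis by (simp add: f_def cinner_def)
  next
    case False
    have "(1 / norm w) *\<^sub>R w \<in> T"
      unfolding T_def using that False assms(1) by (simp add: subspace_scale)
    then have "f ((1 / norm w) *\<^sub>R w) \<le> f v0" by (rule max)
    then have "f w / (norm w)\<^sup>2 \<le> f v0" by (simp add: scale power_divide)
    then show ?thesis using False by (simp add: divide_le_eq mult.commute)
  qed
  moreover have "v0 \<in> S" "norm v0 = 1" using v0 unfolding T_def by auto
  ultimately show thesis using that unfolding f_def by blast
qed

text \<open>The first-order condition at a maximum of the Rayleigh quotient: moving from \<open>v\<^sub>0\<close>
  in an orthogonal direction \<open>w\<close> must not increase it, which kills the linear term.\<close>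

lemma rayleigh_max_orthogonal:
  fixes H :: "complex^'d^'d"
  assumes H: "hermitian H" and S: "csubspace S"
    and v0: "v0 \<in> S" "norm v0 = 1"
    and max: "\<And>w. w \<in> S \<Longrightarrow> Re (cinner w (H *v w)) \<le> Re (cinner v0 (H *v v0)) * (norm w)\<^sup>2"
    and w: "w \<in> S" "cinner v0 w = 0"
  shows "cinner w (H *v v0) = 0"
proof -
  have re: "Re (cinner w (H *v v0)) = 0" if "w \<in> S" "cinner v0 w = 0" for w
  proof (rule linear_coeff_eq_0_if_quadratic_nonpos)
    fix t :: real
    let ?M = "Re (cinner v0 (H *v v0))" and ?a = "Re (cinner w (H *v v0))"
    have "Re (cinner v0 (H *v w)) = Re (cnj (cinner w (H *v v0)))"
      by (simp add: hermitian_cinner[OF H] cnj_cinner)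
    then have "Re (cinner v0 (H *v w)) = ?a" by simp
    then have "Re (cinner (v0 + t *\<^sub>R w) (H *v (v0 + t *\<^sub>R w))) =
        ?M + 2 * t * ?a + t\<^sup>2 * Re (cinner w (H *v w))"
      by (simp add: matrix_vector_mult_scaleR_complex cinner_add_left
          cinner_add_right cinner_scaleR_left cinner_scaleR_right power2_eq_square algebra_simps)
    moreover have "(norm (v0 + t *\<^sub>R w))\<^sup>2 = 1 + t\<^sup>2 * (norm w)\<^sup>2"
    proof -
      have "cinner w v0 = 0" using that(2) cnj_cinner[of v0 w] by simp
      then have "cinner (v0 + t *\<^sub>R w) (v0 + t *\<^sub>R w) = of_real (1 + t\<^sup>2 * (norm w)\<^sup>2)"
        using that(2) v0(2)
        unfolding cinner_add_left cinner_add_right cinner_scaleR_left cinner_scaleR_right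
        by (simp add: cinner_self power2_eq_square)
      then show ?thesis unfolding cinner_self of_real_eq_iff .
    qed
    moreover have "v0 + t *\<^sub>R w \<in> S"
      using S v0 that unfolding csubspace_def by (simp add: subspace_add subspace_scale)
    ultimately have "?M + 2 * t * ?a + t\<^sup>2 * Re (cinner w (H *v w)) \<le> ?M * (1 + t\<^sup>2 * (norm w)\<^sup>2)"
      using max by metis
    then show "2 * t * ?a + t\<^sup>2 * (Re (cinner w (H *v w)) - ?M * (norm w)\<^sup>2) \<le> 0"
      by (simp add: algebra_simps)
  qed
  have "Re (cinner (\<i> *s w) (H *v v0)) = 0"
    using w S by (intro re) (simp_all add: csubspace_smult cinner_smult_right)
  then have "Im (cinner w (H *v v0)) = 0" by (simp add: cinner_smult_left)
  with re[OF w] show ?thesis by (simp add: complex_eq_iff)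
qed

lemma hermitian_eigenvector_exists:
  fixes H :: "complex^'d^'d"
  assumes H: "hermitian H" and S: "csubspace S" and inv: "\<And>v. v \<in> S \<Longrightarrow> H *v v \<in> S"
    and "v \<in> S" "v \<noteq> 0"
  obtains v0 c where "v0 \<in> S" "cinner v0 v0 = 1" "H *v v0 = c *\<^sub>R v0"
proof -
  obtain v0 where v0: "v0 \<in> S" "norm v0 = 1" and
    max: "\<And>w. w \<in> S \<Longrightarrow> Re (cinner w (H *v w)) \<le> Re (cinner v0 (H *v v0)) * (norm w)\<^sup>2"
    using rayleigh_quotient_attains_max[of S v H] assms(4,5) S unfolding csubspace_def by blast
  define c where "c = cinner v0 (H *v v0)"
  have c_real: "c = of_real (Re c)"
    using hermitian_cinner[OF H, of v0 v0] cnj_cinner[of v0 "H *v v0"]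
    by (simp add: c_def complex_eq_iff)
  define z where "z = H *v v0 - c *s v0"
  have "z \<in> S"
    unfolding z_def using S v0 inv csubspace_smult unfolding csubspace_def
    by (blast intro: subspace_diff)
  moreover have v0z: "cinner v0 z = 0"
    using v0(2) by (simp add: z_def cinner_diff_right cinner_smult_right cinner_self c_def)
  ultimately have "cinner z (H *v v0) = 0"
    using rayleigh_max_orthogonal[OF H S v0 max] by blast
  moreover have "cinner z v0 = 0" using v0z cnj_cinner[of v0 z] by simp
  moreover have "cinner z z = cinner z (H *v v0) - c * cinner z v0"
    using cinner_diff_right[of z "H *v v0" "c *s v0"] cinner_smult_right[of z c v0]
    unfolding z_def[symmetric] by simp
  ultimately have "cinner z z = 0" by simp
  then have "H *v v0 = c *s v0"
    by (simp add: cinner_self z_def)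
  also have "c *s v0 = Re c *\<^sub>R v0"
    by (subst c_real) (simp add: scaleR_vec_eq_smult)
  finally have "H *v v0 = Re c *\<^sub>R v0" .
  then show thesis using that[of v0 "Re c"] v0 by (simp add: cinner_self)
qed

definition orthonormal_eigenbasis ::
    "complex^'d^'d \<Rightarrow> (complex^'d) set \<Rightarrow> (complex^'d \<Rightarrow> real) \<Rightarrow> (complex^'d) set \<Rightarrow> bool" where
  "orthonormal_eigenbasis H U h S \<longleftrightarrow> finite U \<and> U \<subseteq> S
     \<and> (\<forall>u\<in>U. \<forall>w\<in>U. cinner u w = (if u = w then 1 else 0))
     \<and> (\<forall>u\<in>U. H *v u = h u *\<^sub>R u) \<and> (\<forall>v\<in>S. v = (\<Sum>u\<in>U. cinner u v *s u))"

lemma orthonormal_eigenbasis_insert: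
  assumes U': "orthonormal_eigenbasis H U' h S'"
    and S: "csubspace S" and S'_def: "S' = {w \<in> S. cinner v0 w = 0}"
    and v0: "v0 \<in> S" "cinner v0 v0 = 1" "H *v v0 = c *\<^sub>R v0"
  shows "orthonormal_eigenbasis H (insert v0 U') (h(v0 := c)) S"
proof -
  have U'S': "U' \<subseteq> S'" and fin: "finite U'"
    using U' by (simp_all add: orthonormal_eigenbasis_def)
  then have v0U': "v0 \<notin> U'" using v0(2) S'_def by auto
  have orth: "cinner v0 u = 0" "cinner u v0 = 0" if "u \<in> U'" for u
    using U'S' that cnj_cinner[of v0 u] S'_def by auto
  have expand: "v = cinner v0 v *s v0 + (\<Sum>u\<in>U'. cinner u v *s u)" if "v \<in> S" for v
  proof -
    define w where "w = v - cinner v0 v *s v0"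
    have "w \<in> S"
      unfolding w_def using S that v0(1) csubspace_smult unfolding csubspace_def
      by (blast intro: subspace_diff)
    moreover have "cinner v0 w = 0"
      using v0(2) by (simp add: w_def cinner_diff_right cinner_smult_right)
    ultimately have "w = (\<Sum>u\<in>U'. cinner u w *s u)"
      using U' S'_def by (simp add: orthonormal_eigenbasis_def)
    also have "\<dots> = (\<Sum>u\<in>U'. cinner u v *s u)"
      by (intro sum.cong refl) (simp add: w_def cinner_diff_right cinner_smult_right orth)
    finally show ?thesis unfolding w_def by (simp add: algebra_simps)
  qed
  show ?thesis
    using U' U'S' fin v0 v0U' orth expand S'_def
    unfolding orthonormal_eigenbasis_def by auto
qed

lemma orthonormal_eigenbasis_exists_csubspace:
  fixes H :: "complex^'d^'d"
  assumes H: "hermitian H"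
  shows "csubspace S \<Longrightarrow> (\<And>v. v \<in> S \<Longrightarrow> H *v v \<in> S) \<Longrightarrow> \<exists>U h. orthonormal_eigenbasis H U h S"
proof (induction "dim S" arbitrary: S rule: less_induct)
  case (less S)
  show ?case
  proof (cases "S \<subseteq> {0}")
    case True
    then have "orthonormal_eigenbasis H {} (\<lambda>_. 0) S"
      unfolding orthonormal_eigenbasis_def by auto
    then show ?thesis by blast
  next
    case False
    then obtain v where "v \<in> S" "v \<noteq> 0" by blast
    with H less.prems obtain v0 c where v0: "v0 \<in> S" "cinner v0 v0 = 1" "H *v v0 = c *\<^sub>R v0"
      by (rule hermitian_eigenvector_exists)
    define S' where "S' = {w \<in> S. cinner v0 w = 0}"
    have S': "csubspace S'"
      using less.prems(1) unfolding S'_def csubspace_def subspace_def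
      by (auto simp: cinner_add_right cinner_scaleR_right cinner_smult_right)
    have "H *v v \<in> S'" if "v \<in> S'" for v
    proof -
      have "cinner v0 (H *v v) = cinner (H *v v0) v" by (rule hermitian_cinner[OF H])
      then show ?thesis
        using that less.prems(2) v0(3) unfolding S'_def by (auto simp: cinner_scaleR_left)
    qed
    moreover have "dim S' < dim S"
    proof (rule dim_psubset)
      have "v0 \<notin> S'" using v0(2) unfolding S'_def by simp
      with v0(1) have "S' \<subset> S" unfolding S'_def by blast
      then show "span S' \<subset> span S"
        using S' less.prems(1) unfolding csubspace_def by (simp add: span_eq_iff[THEN iffD2])
    qed
    ultimately obtain U' h' where "orthonormal_eigenbasis H U' h' S'"
      using less.hyps S' by blast
    then show ?thesis
      using orthonormal_eigenbasis_insert[OF _ less.prems(1) S'_def v0] by blast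
  qed
qed

lemma orthonormal_eigenbasis_exists:
  fixes H :: "complex^'d^'d"
  assumes "hermitian H"
  obtains U h where "orthonormal_eigenbasis H U h UNIV"
  using orthonormal_eigenbasis_exists_csubspace[OF assms, of UNIV]
  by (auto simp: csubspace_def)

section \<open>Matrix powers and the matrix exponential\<close>

lemma norm_matrix_mult_le:
  fixes A :: "complex^'n^'m" and B :: "complex^'p^'n"
  shows "norm (A ** B) \<le> norm A * norm B"
proof -
  let ?a = "\<lambda>i. \<Sum>k\<in>UNIV. (cmod (A $ i $ k))\<^sup>2" and ?b = "\<lambda>j. \<Sum>k\<in>UNIV. (cmod (B $ k $ j))\<^sup>2"
  have entry: "(cmod ((A ** B) $ i $ j))\<^sup>2 \<le> ?a i * ?b j" for i j
  proof -
    have "cmod ((A ** B) $ i $ j) \<le> (\<Sum>k\<in>UNIV. cmod (A $ i $ k * B $ k $ j))"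
      unfolding matrix_matrix_mult_def by (simp add: norm_sum)
    then have "(cmod ((A ** B) $ i $ j))\<^sup>2 \<le> (\<Sum>k\<in>UNIV. cmod (A $ i $ k) * cmod (B $ k $ j))\<^sup>2"
      by (simp add: power_mono norm_mult)
    also have "\<dots> \<le> ?a i * ?b j"
      by (rule Cauchy_Schwarz_ineq_sum)
    finally show ?thesis .
  qed
  have "(norm (A ** B))\<^sup>2 \<le> (\<Sum>i\<in>UNIV. \<Sum>j\<in>UNIV. ?a i * ?b j)"
    unfolding norm_vec_power2[of "A ** B"] norm_vec_power2[of "(A ** B) $ i" for i]
    by (intro sum_mono entry)
  also have "\<dots> = (\<Sum>i\<in>UNIV. ?a i) * (\<Sum>j\<in>UNIV. ?b j)"
    by (rule sum_product[symmetric])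
  also have "(\<Sum>j\<in>UNIV. ?b j) = (\<Sum>k\<in>UNIV. \<Sum>j\<in>UNIV. (cmod (B $ k $ j))\<^sup>2)"
    by (rule sum.swap)
  also have "(\<Sum>i\<in>UNIV. ?a i) * \<dots> = (norm A * norm B)\<^sup>2"
    unfolding power_mult_distrib norm_vec_power2[of A] norm_vec_power2[of B]
      norm_vec_power2[of "A $ i" for i] norm_vec_power2[of "B $ i" for i] ..
  finally show ?thesis by (rule power2_le_imp_le) simp
qed

lemma matrix_add_rdistrib: "((A::'a::semiring_1^'n^'m) + A') ** B = A ** B + A' ** B"
  unfolding vec_eq_iff matrix_matrix_mult_def by (simp add: distrib_right sum.distrib)

lemma bounded_bilinear_matrix_matrix_mult:
  "bounded_bilinear ((**) :: complex^'n^'m \<Rightarrow> complex^'p^'n \<Rightarrow> complex^'p^'m)"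
proof
  fix A A' :: "complex^'n^'m" and B B' :: "complex^'p^'n" and r :: real
  show "(A + A') ** B = A ** B + A' ** B" by (rule matrix_add_rdistrib)
  show "A ** (B + B') = A ** B + A ** B'" by (rule matrix_add_ldistrib)
  show "(r *\<^sub>R A) ** B = r *\<^sub>R (A ** B)" by (rule scalar_matrix_assoc[symmetric])
  show "A ** (r *\<^sub>R B) = r *\<^sub>R (A ** B)" by (simp add: matrix_scalar_ac scalar_matrix_assoc)
next
  show "\<exists>K. \<forall>(A::complex^'n^'m) (B::complex^'p^'n). norm (A ** B) \<le> norm A * norm B * K"
    by (intro exI[of _ 1] allI) (simp add: norm_matrix_mult_le)
qed

lemma mpow_0 [simp]: "mpow A 0 = mat 1"
  by (simp add: mpow_def)

lemma mpow_Suc: "mpow A (Suc n) = A ** mpow A n"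
  by (simp add: mpow_def)

lemma mpow_add: "mpow A (m + n) = mpow A m ** mpow A n"
  by (induction m) (simp_all add: mpow_Suc matrix_mul_assoc)

lemma mpow_Suc_right: "mpow A (Suc n) = mpow A n ** A"
  using mpow_add[of A n 1] by (simp add: mpow_Suc)

lemma norm_mpow_le:
  fixes A :: "complex^'d^'d"
  shows "norm (mpow A n) \<le> norm (mat 1 :: complex^'d^'d) * norm A ^ n"
proof (induction n)
  case (Suc n)
  have "norm (mpow A (Suc n)) \<le> norm A * norm (mpow A n)"
    unfolding mpow_Suc by (rule norm_matrix_mult_le)
  also have "\<dots> \<le> norm A * (norm (mat 1 :: complex^'d^'d) * norm A ^ n)"
    using Suc by (simp add: mult_left_mono)
  finally show ?case by (simp add: mult_ac)
qed simp

lemma summable_mexp: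
  fixes A :: "complex^'d^'d"
  shows "summable (\<lambda>n. (1 / fact n) *\<^sub>R mpow A n)"
proof (rule summable_comparison_test')
  show "summable (\<lambda>n. norm (mat 1 :: complex^'d^'d) * (inverse (fact n) * norm A ^ n))"
    by (intro summable_mult summable_exp)
  show "norm ((1 / fact n) *\<^sub>R mpow A n) \<le> norm (mat 1 :: complex^'d^'d) * (inverse (fact n) * norm A ^ n)"
    for n
    using norm_mpow_le[of A n] by (simp add: divide_inverse mult_left_mono mult_ac)
qed

lemma bounded_linear_sums_mexp:
  fixes L :: "complex^'d^'d \<Rightarrow> real"
  assumes "bounded_linear L"
  shows "(\<lambda>n. L (mpow A n) / fact n) sums L (mexp A)"
proof -
  interpret L: bounded_linear L by (rule assms)
  have "(\<lambda>n. L ((1 / fact n) *\<^sub>R mpow A n)) sums L (mexp A)"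
    unfolding mexp_def by (rule L.sums[OF summable_sums[OF summable_mexp]])
  moreover have "L ((1 / fact n) *\<^sub>R mpow A n) = L (mpow A n) / fact n" for n
    by (simp add: L.scaleR)
  ultimately show ?thesis by simp
qed

text \<open>\<open>mpow_dir_deriv G B n\<close> is the derivative of \<open>t \<mapsto> (G + t B)\<^sup>n\<close> at \<open>t = 0\<close>.\<close>

definition mpow_dir_deriv :: "complex^'d^'d \<Rightarrow> complex^'d^'d \<Rightarrow> nat \<Rightarrow> complex^'d^'d" where
  "mpow_dir_deriv G B n = (\<Sum>a<n. mpow G a ** (B ** mpow G (n - Suc a)))"

lemma mpow_dir_deriv_Suc:
  "mpow_dir_deriv G B (Suc n) = B ** mpow G n + G ** mpow_dir_deriv G B n"
proof -
  have "mpow_dir_deriv G B (Suc n) =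
      mpow G 0 ** (B ** mpow G n) + (\<Sum>a<n. mpow G (Suc a) ** (B ** mpow G (n - Suc a)))"
    unfolding mpow_dir_deriv_def by (subst sum.lessThan_Suc_shift) simp
  also have "(\<Sum>a<n. mpow G (Suc a) ** (B ** mpow G (n - Suc a))) = G ** mpow_dir_deriv G B n"
    unfolding mpow_dir_deriv_def bounded_bilinear.sum_right[OF bounded_bilinear_matrix_matrix_mult]
    by (simp add: mpow_Suc matrix_mul_assoc)
  finally show ?thesis by simp
qed

lemma has_vector_derivative_mpow:
  "((\<lambda>t. mpow (A + t *\<^sub>R B) n) has_vector_derivative mpow_dir_deriv (A + t *\<^sub>R B) B n) (at t)"
proof (induction n)
  case (Suc n)
  have "((\<lambda>t. A + t *\<^sub>R B) has_vector_derivative B) (at t)"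
    by (auto intro!: derivative_eq_intros)
  from bounded_bilinear.has_vector_derivative[OF bounded_bilinear_matrix_matrix_mult this Suc]
  show ?case by (simp add: mpow_Suc mpow_dir_deriv_Suc add.commute)
qed (simp add: mpow_dir_deriv_def)

lemma norm_mpow_dir_deriv_le:
  fixes G B :: "complex^'d^'d"
  shows "norm (mpow_dir_deriv G B n) \<le> real n * norm B * (norm (mat 1 :: complex^'d^'d))\<^sup>2 * norm G ^ (n - 1)"
proof -
  let ?c = "norm (mat 1 :: complex^'d^'d)"
  have summand: "norm (mpow G a ** (B ** mpow G (n - Suc a))) \<le> norm B * ?c\<^sup>2 * norm G ^ (n - 1)"
    if "a < n" for a
  proof -
    have "norm (mpow G a ** (B ** mpow G (n - Suc a))) \<le> norm (mpow G a) * norm (B ** mpow G (n - Suc a))"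
      by (rule norm_matrix_mult_le)
    also have "\<dots> \<le> norm (mpow G a) * (norm B * norm (mpow G (n - Suc a)))"
      by (intro mult_left_mono norm_matrix_mult_le) simp
    also have "\<dots> \<le> (?c * norm G ^ a) * (norm B * (?c * norm G ^ (n - Suc a)))"
      by (intro mult_mono norm_mpow_le mult_nonneg_nonneg) auto
    also have "\<dots> = norm B * ?c\<^sup>2 * norm G ^ (a + (n - Suc a))"
      by (simp add: power2_eq_square power_add mult_ac)
    finally show ?thesis using that by simp
  qed
  have "norm (mpow_dir_deriv G B n) \<le> (\<Sum>a<n. norm (mpow G a ** (B ** mpow G (n - Suc a))))"
    unfolding mpow_dir_deriv_def by (rule norm_sum)
  also have "\<dots> \<le> (\<Sum>a<n. norm B * ?c\<^sup>2 * norm G ^ (n - 1))"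
    using summand by (intro sum_mono) simp
  finally show ?thesis by simp
qed

lemma summable_of_nat_mult_power_divide_fact: "summable (\<lambda>n. real n * x ^ (n - 1) / fact n)"
proof -
  have "(\<lambda>n. real (Suc n) * x ^ (Suc n - 1) / fact (Suc n)) = (\<lambda>n. inverse (fact n) * x ^ n)"
    by (rule ext) (simp add: divide_simps del: of_nat_Suc)
  then have "summable (\<lambda>n. real (Suc n) * x ^ (Suc n - 1) / fact (Suc n))"
    using summable_exp by simp
  then show ?thesis by (rule summable_Suc_iff[THEN iffD1])
qed

text \<open>Termwise differentiation of the exponential series, justified by a Weierstrass
  M-test on \<open>|t| < 1\<close>.\<close>

lemma has_real_derivative_mexp_line:
  fixes L :: "complex^'d^'d \<Rightarrow> real" and A B :: "complex^'d^'d"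
  assumes "bounded_linear L"
  shows "((\<lambda>t. L (mexp (A + t *\<^sub>R B))) has_real_derivative
           (\<Sum>n. L (mpow_dir_deriv A B n) / fact n)) (at 0)"
proof -
  interpret L: bounded_linear L by (rule assms)
  obtain cL where cL: "\<And>M. norm (L M) \<le> norm M * cL" "cL > 0"
    using L.pos_bounded by blast
  define S where "S = {-1<..<1::real}"
  define f where "f n t = L (mpow (A + t *\<^sub>R B) n) / fact n" for n t
  define f' where "f' n t = L (mpow_dir_deriv (A + t *\<^sub>R B) B n) / fact n" for n t
  define c where "c = norm (mat 1 :: complex^'d^'d)"
  define M where "M n = cL * norm B * c\<^sup>2 * (real n * (norm A + norm B) ^ (n - 1) / fact n)" for n
  have "(f n has_real_derivative f' n t) (at t)" for n t
  proof -
    have "((\<lambda>t. L (mpow (A + t *\<^sub>R B) n)) has_vector_derivative L (mpow_dir_deriv (A + t *\<^sub>R B) B n)) (at t)"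
      by (rule L.has_vector_derivative[OF has_vector_derivative_mpow])
    then show ?thesis
      unfolding f_def[abs_def] f'_def has_real_derivative_iff_has_vector_derivative[symmetric]
      by (rule DERIV_cdivide)
  qed
  then have deriv: "(f n has_field_derivative f' n t) (at t within S)" for n t
    by (rule has_field_derivative_at_within)
  have bound: "norm (f' n t) \<le> M n" if "t \<in> S" for n t
  proof -
    have "\<bar>t\<bar> \<le> 1" using that unfolding S_def by auto
    then have "norm (A + t *\<^sub>R B) \<le> norm A + norm B"
      using norm_triangle_ineq[of A "t *\<^sub>R B"] mult_left_le_one_le[of "norm B" "\<bar>t\<bar>"] by simp
    have "norm (L (mpow_dir_deriv (A + t *\<^sub>R B) B n)) \<le> norm (mpow_dir_deriv (A + t *\<^sub>R B) B n) * cL"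
      by (rule cL(1))
    also have "\<dots> \<le> (real n * norm B * c\<^sup>2 * norm (A + t *\<^sub>R B) ^ (n - 1)) * cL"
      using norm_mpow_dir_deriv_le cL(2) unfolding c_def by (intro mult_right_mono) simp_all
    also have "\<dots> \<le> (real n * norm B * c\<^sup>2 * (norm A + norm B) ^ (n - 1)) * cL"
      using \<open>norm (A + t *\<^sub>R B) \<le> norm A + norm B\<close> cL(2)
      by (intro mult_right_mono mult_left_mono power_mono) simp_all
    finally have "norm (L (mpow_dir_deriv (A + t *\<^sub>R B) B n))
        \<le> (real n * norm B * c\<^sup>2 * (norm A + norm B) ^ (n - 1)) * cL" .
    then show ?thesis
      unfolding f'_def M_def by (simp add: norm_divide divide_right_mono mult_ac)
  qed
  have "summable M"
    unfolding M_def by (intro summable_mult summable_of_nat_mult_power_divide_fact)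
  then have uconv: "uniformly_convergent_on S (\<lambda>n t. \<Sum>i<n. f' i t)"
    unfolding uniformly_convergent_on_def
    using Weierstrass_m_test_ev[OF always_eventually] bound by blast
  have summable0: "summable (\<lambda>n. f n 0)"
    using bounded_linear_sums_mexp[OF assms, of A] unfolding f_def by (simp add: sums_summable)
  have S: "convex S" "0 \<in> S" "0 \<in> interior S"
    unfolding S_def by (auto simp: interior_open)
  have "((\<lambda>t. \<Sum>n. f n t) has_field_derivative (\<Sum>n. f' n 0)) (at 0)"
    by (rule has_field_derivative_series'(2)[OF S(1) deriv uconv S(2) summable0 S(3)])
  moreover have "(\<Sum>n. f n t) = L (mexp (A + t *\<^sub>R B))" for t
    using bounded_linear_sums_mexp[OF assms] unfolding f_def by (rule sums_unique[symmetric])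
  ultimately show ?thesis by (simp add: f'_def)
qed

section \<open>Partial derivatives of \<open>ell\<close>\<close>

lemma mtrace_sum: "mtrace (sum f S) = (\<Sum>s\<in>S. mtrace (f s))"
  unfolding mtrace_def sum_component by (rule sum.swap)

lemma bounded_linear_mtrace: "bounded_linear mtrace"
  unfolding mtrace_def[abs_def]
  by (intro bounded_linear_sum bounded_linear_compose[OF bounded_linear_vec_nth bounded_linear_vec_nth])

lemma bounded_linear_Re_mtrace_mult: "bounded_linear (\<lambda>M. Re (mtrace (C ** M)))"
  by (intro bounded_linear_compose[OF bounded_linear_Re] bounded_linear_compose[OF bounded_linear_mtrace]
      bounded_bilinear.bounded_linear_right[OF bounded_bilinear_matrix_matrix_mult])

lemma mtrace_mult_commute: "mtrace (A ** B) = mtrace (B ** A)"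
proof -
  have "mtrace (A ** B) = (\<Sum>i\<in>UNIV. \<Sum>k\<in>UNIV. A $ i $ k * B $ k $ i)"
    by (simp add: mtrace_def matrix_matrix_mult_def)
  also have "\<dots> = (\<Sum>k\<in>UNIV. \<Sum>i\<in>UNIV. A $ i $ k * B $ k $ i)"
    by (rule sum.swap)
  also have "\<dots> = mtrace (B ** A)"
    by (simp add: mtrace_def matrix_matrix_mult_def mult.commute)
  finally show ?thesis .
qed

lemma mtrace_mpow_dir_deriv: "mtrace (mpow_dir_deriv H B n) = of_nat n * mtrace (B ** mpow H (n - 1))"
proof -
  have "mtrace (mpow H a ** (B ** mpow H (n - Suc a))) = mtrace (B ** mpow H (n - 1))" if "a < n" for a
  proof -
    have "mtrace (mpow H a ** (B ** mpow H (n - Suc a))) = mtrace ((B ** mpow H (n - Suc a)) ** mpow H a)"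
      by (rule mtrace_mult_commute)
    also have "\<dots> = mtrace (B ** (mpow H (n - Suc a) ** mpow H a))"
      by (simp add: matrix_mul_assoc)
    also have "mpow H (n - Suc a) ** mpow H a = mpow H (n - 1)"
      using that by (simp flip: mpow_add)
    finally show ?thesis .
  qed
  then show ?thesis
    by (simp add: mpow_dir_deriv_def mtrace_sum)
qed

text \<open>Differentiating \<open>tr exp\<close> only needs the cyclicity of the trace: it collapses the
  \<open>n\<close> summands of the derivative of \<open>H\<^sup>n\<close> to \<open>n B H\<^sup>n\<^sup>-\<^sup>1\<close>.\<close>

lemma suminf_mtrace_mpow_dir_deriv:
  "(\<Sum>n. Re (mtrace (mpow_dir_deriv H B n)) / fact n) = Re (mtrace (B ** mexp H))"
proof -
  define T where "T n = Re (mtrace (mpow_dir_deriv H B n)) / fact n" for n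
  have "(\<lambda>n. Re (mtrace (B ** mpow H n)) / fact n) sums Re (mtrace (B ** mexp H))"
    by (rule bounded_linear_sums_mexp[OF bounded_linear_Re_mtrace_mult])
  moreover have "T (Suc n) = Re (mtrace (B ** mpow H n)) / fact n" for n
    by (simp add: T_def mtrace_mpow_dir_deriv del: of_nat_Suc)
  ultimately have "(\<lambda>n. T (Suc n)) sums Re (mtrace (B ** mexp H))" by simp
  moreover have "T 0 = 0" by (simp add: T_def mpow_dir_deriv_def mtrace_def)
  ultimately have "T sums Re (mtrace (B ** mexp H))"
    using sums_Suc_iff[of T] by simp
  then show ?thesis unfolding T_def by (rule sums_unique[symmetric])
qed

lemma lin_comb_add_axis: "lin_comb (lam + t *\<^sub>R axis j 1) F = lin_comb lam F + t *\<^sub>R F j"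
proof -
  have "lin_comb (lam + t *\<^sub>R axis j 1) F = lin_comb lam F + (\<Sum>k\<in>UNIV. (t * axis j 1 $ k) *\<^sub>R F k)"
    unfolding lin_comb_def by (simp add: scaleR_add_left sum.distrib)
  also have "(\<Sum>k\<in>UNIV. (t * axis j 1 $ k) *\<^sub>R F k) = t *\<^sub>R F j"
    by (simp add: axis_def if_distrib if_distribR cong: if_cong)
  finally show ?thesis .
qed

lemma pderiv_coord_ell: "pderiv_coord (ell F) j lam = Re (mtrace (F j ** mexp (lin_comb lam F)))"
proof -
  have "((\<lambda>t. Re (mtrace (mexp (lin_comb lam F + t *\<^sub>R F j)))) has_real_derivative
      (\<Sum>n. Re (mtrace (mpow_dir_deriv (lin_comb lam F) (F j) n)) / fact n)) (at 0)"
    using has_real_derivative_mexp_line[of "\<lambda>M. Re (mtrace M)"]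
    by (simp add: bounded_linear_compose[OF bounded_linear_Re bounded_linear_mtrace])
  then show ?thesis
    unfolding pderiv_coord_def ell_def lin_comb_add_axis suminf_mtrace_mpow_dir_deriv
    by (rule DERIV_imp_deriv)
qed

lemma Delta_mat_eq:
  "Delta_mat F lam $ i $ j = (if i = j then Re (mtrace (F j ** mexp (lin_comb lam F))) else 0)"
  by (simp add: Delta_mat_def pderiv_coord_ell)

lemma Lambda_mat_eq_suminf:
  "Lambda_mat F lam $ i $ j = (\<Sum>n. Re (mtrace (F j ** mpow_dir_deriv (lin_comb lam F) (F i) n)) / fact n)"
proof -
  have "((\<lambda>t. pderiv_coord (ell F) j (lam + t *\<^sub>R axis i 1)) has_real_derivative
      (\<Sum>n. Re (mtrace (F j ** mpow_dir_deriv (lin_comb lam F) (F i) n)) / fact n)) (at 0)"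
    unfolding pderiv_coord_ell lin_comb_add_axis
    by (rule has_real_derivative_mexp_line[OF bounded_linear_Re_mtrace_mult])
  then have "pderiv_coord (pderiv_coord (ell F) j) i lam =
      (\<Sum>n. Re (mtrace (F j ** mpow_dir_deriv (lin_comb lam F) (F i) n)) / fact n)"
    unfolding pderiv_coord_def[of "pderiv_coord (ell F) j"] by (rule DERIV_imp_deriv)
  then show ?thesis by (simp add: Lambda_mat_def)
qed

section \<open>Divided differences of the exponential\<close>

definition power_divdiff :: "nat \<Rightarrow> real \<Rightarrow> real \<Rightarrow> real" where
  "power_divdiff n x y = (\<Sum>i<n. y ^ (n - Suc i) * x ^ i)"

definition exp_divdiff :: "real \<Rightarrow> real \<Rightarrow> real" where
  "exp_divdiff p q = (if p = q then exp p else (exp p - exp q) / (p - q))"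

lemma exp_divdiff_commute: "exp_divdiff p q = exp_divdiff q p"
  unfolding exp_divdiff_def by (auto simp: field_simps)

lemma sums_exp_divdiff: "(\<lambda>n. power_divdiff n p q / fact n) sums exp_divdiff p q"
proof (cases "p = q")
  case True
  define T where "T n = power_divdiff n p p / fact n" for n
  have "T (Suc n) = p ^ n / fact n" for n
    by (simp add: T_def power_divdiff_def divide_simps flip: power_add del: of_nat_Suc)
  then have "(\<lambda>n. T (Suc n)) sums exp p"
    using exp_converges[of p] by (simp add: divide_inverse mult.commute)
  moreover have "T 0 = 0" by (simp add: T_def power_divdiff_def)
  ultimately have "T sums exp p" using sums_Suc_iff[of T] by simp
  then show ?thesis using True unfolding T_def exp_divdiff_def by simp
next
  case False
  have "power_divdiff n p q = (p ^ n - q ^ n) / (p - q)" for n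
    using power_diff_sumr2[of p n q] False unfolding power_divdiff_def by (simp add: field_simps)
  then have "power_divdiff n p q / fact n = (p ^ n / fact n - q ^ n / fact n) / (p - q)" for n
    by (simp add: field_simps)
  moreover have "(\<lambda>n. (p ^ n / fact n - q ^ n / fact n) / (p - q)) sums ((exp p - exp q) / (p - q))"
    using exp_converges[of p] exp_converges[of q]
    by (intro sums_divide sums_diff) (simp_all add: divide_inverse mult.commute)
  ultimately show ?thesis using False by (simp add: exp_divdiff_def)
qed

lemma two_mult_exp_minus_one_le:
  fixes d :: real
  assumes "d \<ge> 0"
  shows "2 * (exp d - 1) \<le> d * (exp d + 1)"
proof -
  define g where "g x = x * (exp x + 1) - 2 * (exp x - 1)" for x :: real
  have g': "(g has_real_derivative 1 - exp x + x * exp x) (at x)" for x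
    unfolding g_def by (auto intro!: derivative_eq_intros simp: algebra_simps)
  have g'_nonneg: "1 - exp x + x * exp x \<ge> 0" if "x \<ge> 0" for x :: real
  proof -
    have "((\<lambda>x. 1 - exp x + x * exp x) has_real_derivative x * exp x) (at x)" for x :: real
      by (auto intro!: derivative_eq_intros)
    then have "1 - exp 0 + 0 * exp 0 \<le> 1 - exp x + x * exp x"
      by (intro DERIV_nonneg_imp_nondecreasing[OF that]) (blast intro: mult_nonneg_nonneg exp_ge_zero)
    then show ?thesis by simp
  qed
  have "g 0 \<le> g d"
    using g' g'_nonneg by (intro DERIV_nonneg_imp_nondecreasing[OF assms]) blast
  then show ?thesis by (simp add: g_def)
qed

lemma exp_divdiff_le_mean: "exp_divdiff p q \<le> (exp p + exp q) / 2"
proof -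
  have le: "exp_divdiff p q \<le> (exp p + exp q) / 2" if "q < p" for p q :: real
  proof -
    define d where "d = p - q"
    have "d > 0" and ep: "exp p = exp q * exp d"
      using that by (simp_all add: d_def flip: exp_add)
    have "(exp d - 1) / d \<le> (exp d + 1) / 2"
      using two_mult_exp_minus_one_le[of d] \<open>d > 0\<close> by (simp add: divide_simps mult.commute)
    then have "exp q * ((exp d - 1) / d) \<le> exp q * ((exp d + 1) / 2)"
      by (rule mult_left_mono) simp
    moreover have "exp_divdiff p q = exp q * ((exp d - 1) / d)"
      using that unfolding exp_divdiff_def ep d_def[symmetric] by (simp add: algebra_simps)
    ultimately show ?thesis
      unfolding ep by (simp add: algebra_simps)
  qed
  consider "p = q" | "q < p" | "p < q" by linarith
  then show ?thesis
  proof cases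
    case 1
    then show ?thesis by (simp add: exp_divdiff_def)
  next
    case 2
    then show ?thesis by (rule le)
  next
    case 3
    then show ?thesis using le[OF 3] exp_divdiff_commute[of p q] by (simp add: add.commute)
  qed
qed

section \<open>Traces in an orthonormal eigenbasis\<close>

definition matrix_elem_prod :: "complex^'d^'d \<Rightarrow> complex^'d^'d \<Rightarrow> complex^'d \<Rightarrow> complex^'d \<Rightarrow> real" where
  "matrix_elem_prod P Q a b = Re (cnj (cinner b (P *v a)) * cinner b (Q *v a))"

lemma matrix_elem_prod_self: "matrix_elem_prod P P a b = (cmod (cinner b (P *v a)))\<^sup>2"
  unfolding matrix_elem_prod_def by (metis Re_complex_of_real complex_norm_square mult.commute)

lemma matrix_elem_prod_swap:
  assumes "hermitian P" "hermitian Q"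
  shows "matrix_elem_prod P Q a b = matrix_elem_prod Q P b a"
proof -
  have "cinner a (P *v b) = cnj (cinner b (P *v a))" "cinner a (Q *v b) = cnj (cinner b (Q *v a))"
    by (simp_all add: hermitian_cinner[OF assms(1)] hermitian_cinner[OF assms(2)] cnj_cinner)
  then show ?thesis unfolding matrix_elem_prod_def by (simp add: mult.commute)
qed

context
  fixes H :: "complex^'d^'d" and U and h
  assumes basis: "orthonormal_eigenbasis H U h UNIV" and H: "hermitian H"
begin

lemma eigenbasis_eigenvalue: "u \<in> U \<Longrightarrow> H *v u = h u *\<^sub>R u"
  using basis by (simp add: orthonormal_eigenbasis_def)

lemma cinner_eq_sum_eigenbasis: "cinner y z = (\<Sum>u\<in>U. cnj (cinner u y) * cinner u z)"
proof -
  have "z = (\<Sum>u\<in>U. cinner u z *s u)"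
    using basis by (simp add: orthonormal_eigenbasis_def)
  then have "cinner y z = (\<Sum>u\<in>U. cinner u z * cinner y u)"
    by (metis (no_types, lifting) cinner_smult_right cinner_sum_right sum.cong)
  then show ?thesis by (simp add: cnj_cinner mult.commute)
qed

lemma power2_norm_eq_sum_eigenbasis: "(norm y)\<^sup>2 = (\<Sum>u\<in>U. (cmod (cinner u y))\<^sup>2)"
proof -
  have "of_real ((norm y)\<^sup>2) = cinner y y"
    by (simp add: cinner_self)
  also have "\<dots> = (\<Sum>u\<in>U. cnj (cinner u y) * cinner u y)"
    by (rule cinner_eq_sum_eigenbasis)
  also have "\<dots> = of_real (\<Sum>u\<in>U. (cmod (cinner u y))\<^sup>2)"
    unfolding of_real_sum by (intro sum.cong refl) (metis complex_norm_square mult.commute)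
  finally show ?thesis by (simp only: of_real_eq_iff)
qed

lemma mpow_mult_eigenvector: "u \<in> U \<Longrightarrow> mpow H n *v u = (h u ^ n) *\<^sub>R u"
  by (induction n)
    (simp_all add: mpow_Suc eigenbasis_eigenvalue matrix_vector_mult_scaleR_complex
      flip: matrix_vector_mul_assoc)

lemma cinner_mpow: "u \<in> U \<Longrightarrow> cinner u (mpow H n *v z) = of_real (h u ^ n) * cinner u z"
proof (induction n arbitrary: z)
  case (Suc n)
  have "cinner u (mpow H (Suc n) *v z) = of_real (h u ^ n) * cinner u (H *v z)"
    using Suc by (simp add: mpow_Suc_right flip: matrix_vector_mul_assoc)
  also have "cinner u (H *v z) = of_real (h u) * cinner u z"
    using Suc.prems by (simp add: hermitian_cinner[OF H] eigenbasis_eigenvalue cinner_scaleR_left)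
  finally show ?case by (simp add: mult.assoc)
qed simp

lemma mexp_mult_eigenvector:
  assumes "u \<in> U"
  shows "mexp H *v u = exp (h u) *\<^sub>R u"
proof -
  have "(\<lambda>n. ((1 / fact n) *\<^sub>R mpow H n) *v u) sums (mexp H *v u)"
    unfolding mexp_def
    by (rule bounded_linear.sums[OF bounded_linear_matrix_vector_mult_left summable_sums[OF summable_mexp]])
  moreover have "((1 / fact n) *\<^sub>R mpow H n) *v u = (h u ^ n / fact n) *\<^sub>R u" for n
    using mpow_mult_eigenvector[OF assms] by (simp add: matrix_scaleR_vector_mult)
  moreover have "(\<lambda>n. (h u ^ n / fact n) *\<^sub>R u) sums (exp (h u) *\<^sub>R u)"
    using exp_converges[of "h u"] by (intro sums_scaleR_left) (simp add: divide_inverse mult.commute)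
  ultimately show ?thesis using sums_unique2 by fastforce
qed

lemma mtrace_eq_sum_eigenbasis: "mtrace M = (\<Sum>u\<in>U. cinner u (M *v u))"
proof -
  have "mtrace M = (\<Sum>i\<in>UNIV. \<Sum>u\<in>U. cnj (cinner u (axis i 1)) * cinner u (M *v axis i 1))"
    unfolding mtrace_def cinner_eq_sum_eigenbasis[symmetric] by (simp add: cinner_axis_left matrix_vector_mult_axis)
  also have "\<dots> = (\<Sum>u\<in>U. \<Sum>i\<in>UNIV. cinner u ((u $ i) *s (M *v axis i 1)))"
    by (subst sum.swap) (simp add: cinner_smult_right cnj_cinner cinner_axis_left)
  also have "\<dots> = (\<Sum>u\<in>U. cinner u (M *v u))"
  proof -
    have "(\<Sum>i\<in>UNIV. (u $ i) *s (M *v axis i 1)) = M *v u" for u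
      unfolding vec_eq_iff sum_component vector_smult_component matrix_vector_mult_axis
      by (simp add: matrix_vector_mult_def mult.commute)
    then show ?thesis by (simp flip: cinner_sum_right)
  qed
  finally show ?thesis .
qed

lemma Re_mtrace_mult_mexp:
  "Re (mtrace (P ** mexp H)) = (\<Sum>u\<in>U. exp (h u) * Re (cinner u (P *v u)))"
  by (simp add: mtrace_eq_sum_eigenbasis mexp_mult_eigenvector matrix_vector_mult_scaleR_complex
      cinner_scaleR_right flip: matrix_vector_mul_assoc)

lemma Re_mtrace_mult_mpow_mult_mpow:
  assumes P: "hermitian P"
  shows "Re (mtrace (P ** (mpow H a ** (Q ** mpow H b)))) =
    (\<Sum>\<alpha>\<in>U. \<Sum>\<beta>\<in>U. matrix_elem_prod P Q \<alpha> \<beta> * (h \<beta> ^ a * h \<alpha> ^ b))"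
proof -
  have Re_of_real_mult: "Re (of_real r * z) = r * Re z" for r z
    by simp
  have "Re (cinner \<alpha> ((P ** (mpow H a ** (Q ** mpow H b))) *v \<alpha>)) =
      (\<Sum>\<beta>\<in>U. matrix_elem_prod P Q \<alpha> \<beta> * (h \<beta> ^ a * h \<alpha> ^ b))" if "\<alpha> \<in> U" for \<alpha>
  proof -
    have "cinner \<alpha> ((P ** (mpow H a ** (Q ** mpow H b))) *v \<alpha>) =
        of_real (h \<alpha> ^ b) * cinner (P *v \<alpha>) (mpow H a *v (Q *v \<alpha>))"
      by (simp add: mpow_mult_eigenvector[OF that] matrix_vector_mult_scaleR_complex
          cinner_scaleR_right hermitian_cinner[OF P] flip: matrix_vector_mul_assoc)
    also have "cinner (P *v \<alpha>) (mpow H a *v (Q *v \<alpha>)) =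
        (\<Sum>\<beta>\<in>U. of_real (h \<beta> ^ a) * (cnj (cinner \<beta> (P *v \<alpha>)) * cinner \<beta> (Q *v \<alpha>)))"
      unfolding cinner_eq_sum_eigenbasis[of "P *v \<alpha>"] by (intro sum.cong refl) (simp add: cinner_mpow mult_ac)
    finally have "Re (cinner \<alpha> ((P ** (mpow H a ** (Q ** mpow H b))) *v \<alpha>)) =
        h \<alpha> ^ b * (\<Sum>\<beta>\<in>U. h \<beta> ^ a * matrix_elem_prod P Q \<alpha> \<beta>)"
      by (simp only: Re_sum matrix_elem_prod_def Re_of_real_mult)
    then show ?thesis by (simp add: sum_distrib_left mult_ac)
  qed
  then show ?thesis
    by (simp add: mtrace_eq_sum_eigenbasis)
qed

lemma Re_mtrace_mult_mpow_dir_deriv: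
  assumes "hermitian P"
  shows "Re (mtrace (P ** mpow_dir_deriv H Q n)) =
    (\<Sum>\<alpha>\<in>U. \<Sum>\<beta>\<in>U. matrix_elem_prod P Q \<alpha> \<beta> * power_divdiff n (h \<beta>) (h \<alpha>))"
proof -
  have "Re (mtrace (P ** mpow_dir_deriv H Q n)) =
      (\<Sum>a<n. \<Sum>\<alpha>\<in>U. \<Sum>\<beta>\<in>U. matrix_elem_prod P Q \<alpha> \<beta> * (h \<beta> ^ a * h \<alpha> ^ (n - Suc a)))"
    unfolding mpow_dir_deriv_def bounded_bilinear.sum_right[OF bounded_bilinear_matrix_matrix_mult]
    by (simp add: mtrace_sum Re_mtrace_mult_mpow_mult_mpow[OF assms])
  also have "\<dots> = (\<Sum>\<alpha>\<in>U. \<Sum>\<beta>\<in>U. \<Sum>a<n. matrix_elem_prod P Q \<alpha> \<beta> * (h \<beta> ^ a * h \<alpha> ^ (n - Suc a)))"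
    by (subst sum.swap) (simp add: sum.swap[of _ "{..<n}"])
  also have "\<dots> = (\<Sum>\<alpha>\<in>U. \<Sum>\<beta>\<in>U. matrix_elem_prod P Q \<alpha> \<beta> * power_divdiff n (h \<beta>) (h \<alpha>))"
    by (simp add: power_divdiff_def sum_distrib_left mult.commute)
  finally show ?thesis .
qed

lemma sums_Re_mtrace_mult_mpow_dir_deriv:
  assumes "hermitian P"
  shows "(\<lambda>n. Re (mtrace (P ** mpow_dir_deriv H Q n)) / fact n) sums
    (\<Sum>\<alpha>\<in>U. \<Sum>\<beta>\<in>U. matrix_elem_prod P Q \<alpha> \<beta> * exp_divdiff (h \<beta>) (h \<alpha>))"
proof -
  have "(\<lambda>n. \<Sum>\<alpha>\<in>U. \<Sum>\<beta>\<in>U. matrix_elem_prod P Q \<alpha> \<beta> * (power_divdiff n (h \<beta>) (h \<alpha>) / fact n)) sums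
      (\<Sum>\<alpha>\<in>U. \<Sum>\<beta>\<in>U. matrix_elem_prod P Q \<alpha> \<beta> * exp_divdiff (h \<beta>) (h \<alpha>))"
    by (intro sums_sum sums_mult sums_exp_divdiff)
  then show ?thesis
    by (simp add: Re_mtrace_mult_mpow_dir_deriv[OF assms] sum_divide_distrib)
qed

end

section \<open>The operator inequality \<open>(x\<cdot>F)\<^sup>2 \<preceq> \<Sum>\<^sub>j x\<^sub>j\<^sup>2 F\<^sub>j\<close>\<close>

lemma le_mult_if_quadratic_nonneg:
  fixes a c m :: real
  assumes "a \<ge> 0" "c \<ge> 0" "m \<ge> 0" "\<And>s. 0 \<le> a - 2 * s * m + s\<^sup>2 * m * c"
  shows "m \<le> a * c"
proof (cases "m = 0")
  case False
  then have "m > 0" using assms(3) by simp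
  show ?thesis
  proof (cases "c = 0")
    case True
    have "0 \<le> a - 2 * ((a + 1) / (2 * m)) * m + ((a + 1) / (2 * m))\<^sup>2 * m * c"
      by (rule assms(4))
    also have "\<dots> = -1" using \<open>m > 0\<close> True by (simp add: field_simps)
    finally show ?thesis by simp
  next
    case False
    then have "c > 0" using assms(2) by simp
    have "0 \<le> a - 2 * (1 / c) * m + (1 / c)\<^sup>2 * m * c" by (rule assms(4))
    also have "\<dots> = a - m / c" using \<open>c > 0\<close> by (simp add: field_simps power2_eq_square)
    finally show ?thesis using \<open>c > 0\<close> by (simp add: field_simps)
  qed
qed (use assms in simp)

lemma cpsd_cauchy_schwarz:
  assumes "cpsd F"
  shows "(cmod (cinner y (F *v v)))\<^sup>2 \<le> Re (cinner y (F *v y)) * Re (cinner v (F *v v))"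
proof -
  have nonneg: "0 \<le> Re (cinner w (F *v w))" for w
    using assms unfolding cpsd_def cquad_eq_cinner by blast
  define b where "b = cinner y (F *v v)"
  define m where "m = (cmod b)\<^sup>2"
  have bb: "b * cnj b = of_real m" unfolding m_def by (rule complex_norm_square[symmetric])
  have vy: "cinner v (F *v y) = cnj b"
    unfolding b_def by (simp add: hermitian_cinner[OF cpsd_imp_hermitian[OF assms]] cnj_cinner)
  show ?thesis unfolding b_def[symmetric] m_def[symmetric]
  proof (rule le_mult_if_quadratic_nonneg[OF nonneg nonneg])
    show "0 \<le> m" unfolding m_def by simp
    fix s :: real
    define t where "t = - (of_real s * cnj b)"
    have "cinner (y + t *s v) (F *v (y + t *s v)) =
        cinner y (F *v y) + t * b + cnj t * cnj b + cnj t * t * cinner v (F *v v)"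
      unfolding matrix_vector_right_distrib vector_scalar_commute cinner_add_left cinner_add_right
        cinner_smult_left cinner_smult_right b_def[symmetric] vy
      by (simp add: algebra_simps)
    also have "\<dots> = cinner y (F *v y) - of_real (2 * s * m) + of_real (s\<^sup>2 * m) * cinner v (F *v v)"
    proof -
      have "t * b = - of_real (s * m)" "cnj t * cnj b = - of_real (s * m)"
        "cnj t * t = of_real (s\<^sup>2 * m)"
        unfolding t_def using bb by (simp_all add: mult_ac power2_eq_square)
      then show ?thesis by simp
    qed
    finally show "0 \<le> Re (cinner y (F *v y)) - 2 * s * m + s\<^sup>2 * m * Re (cinner v (F *v v))"
      using nonneg[of "y + t *s v"] by simp
  qed
qed

lemma le_sum_power2_if_le_sum_sqrt_mult:
  fixes N :: real and a c :: "'j \<Rightarrow> real"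
  assumes "finite J" "\<And>j. j \<in> J \<Longrightarrow> a j \<ge> 0" "N \<le> (\<Sum>j\<in>J. sqrt (a j) * c j)" "(\<Sum>j\<in>J. a j) \<le> N"
  shows "N \<le> (\<Sum>j\<in>J. (c j)\<^sup>2)"
proof -
  let ?S = "\<Sum>j\<in>J. sqrt (a j) * c j" and ?C = "\<Sum>j\<in>J. (c j)\<^sup>2"
  have "0 \<le> (\<Sum>j\<in>J. a j)" using assms(2) by (rule sum_nonneg)
  then have "N \<ge> 0" using assms(4) by linarith
  have "?S\<^sup>2 \<le> (\<Sum>j\<in>J. (sqrt (a j))\<^sup>2) * ?C"
    by (rule Cauchy_Schwarz_ineq_sum)
  also have "(\<Sum>j\<in>J. (sqrt (a j))\<^sup>2) = (\<Sum>j\<in>J. a j)"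
    using assms(2) by simp
  also have "(\<Sum>j\<in>J. a j) * ?C \<le> N * ?C"
    using assms(4) by (intro mult_right_mono sum_nonneg) auto
  finally have "N * N \<le> N * ?C"
    using assms(3) \<open>N \<ge> 0\<close> power_mono[of N ?S 2] by (simp add: power2_eq_square)
  then show ?thesis
    using \<open>N \<ge> 0\<close> sum_nonneg[of J "\<lambda>j. (c j)\<^sup>2"]
    by (cases "N = 0") (auto simp: mult_le_cancel_left)
qed

lemma power2_norm_lin_comb_mult_le:
  fixes F :: "'k::finite \<Rightarrow> complex^'d::finite^'d" and x :: "real^'k"
  assumes psd: "\<And>j. cpsd (F j)" and le: "cloewner_le (\<Sum>j\<in>UNIV. F j) (mat 1)"
  shows "(norm (lin_comb x F *v v))\<^sup>2 \<le> (\<Sum>j\<in>UNIV. (x $ j)\<^sup>2 * Re (cinner v (F j *v v)))"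
proof -
  define y where "y = lin_comb x F *v v"
  define a where "a j = Re (cinner y (F j *v y))" for j
  define b where "b j = Re (cinner v (F j *v v))" for j
  have a: "a j \<ge> 0" and b: "b j \<ge> 0" for j
    using psd unfolding cpsd_def cquad_eq_cinner a_def b_def by blast+
  have lin_comb_mult: "lin_comb x F *v v = (\<Sum>j\<in>UNIV. x $ j *\<^sub>R (F j *v v))"
    unfolding lin_comb_def by (simp add: sum_matrix_vector_mult matrix_scaleR_vector_mult)
  have "(norm y)\<^sup>2 = Re (cinner y (lin_comb x F *v v))"
    unfolding y_def[symmetric] by (simp add: cinner_self)
  also have "\<dots> = (\<Sum>j\<in>UNIV. x $ j * Re (cinner y (F j *v v)))"
    by (simp add: lin_comb_mult cinner_sum_right cinner_scaleR_right)
  also have "\<dots> \<le> (\<Sum>j\<in>UNIV. sqrt (a j) * (\<bar>x $ j\<bar> * sqrt (b j)))"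
  proof (rule sum_mono)
    fix j
    have "(cmod (cinner y (F j *v v)))\<^sup>2 \<le> a j * b j"
      unfolding a_def b_def by (rule cpsd_cauchy_schwarz[OF psd])
    then have "cmod (cinner y (F j *v v)) \<le> sqrt (a j) * sqrt (b j)"
      unfolding real_sqrt_mult[symmetric] by (rule real_le_rsqrt)
    have "x $ j * Re (cinner y (F j *v v)) \<le> \<bar>x $ j\<bar> * \<bar>Re (cinner y (F j *v v))\<bar>"
      by (metis abs_ge_self abs_mult)
    also have "\<dots> \<le> \<bar>x $ j\<bar> * cmod (cinner y (F j *v v))"
      by (intro mult_left_mono abs_Re_le_cmod) simp
    also have "\<dots> \<le> \<bar>x $ j\<bar> * (sqrt (a j) * sqrt (b j))"
      by (intro mult_left_mono \<open>cmod (cinner y (F j *v v)) \<le> sqrt (a j) * sqrt (b j)\<close>) simp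
    finally show "x $ j * Re (cinner y (F j *v v)) \<le> sqrt (a j) * (\<bar>x $ j\<bar> * sqrt (b j))"
      by (simp add: mult_ac)
  qed
  finally have "(norm y)\<^sup>2 \<le> (\<Sum>j\<in>UNIV. sqrt (a j) * (\<bar>x $ j\<bar> * sqrt (b j)))" .
  moreover have "(\<Sum>j\<in>UNIV. a j) \<le> (norm y)\<^sup>2"
  proof -
    have "0 \<le> Re (cquad (mat 1 - (\<Sum>j\<in>UNIV. F j)) y)"
      using le unfolding cloewner_le_def cpsd_def by blast
    also have "cquad (mat 1 - (\<Sum>j\<in>UNIV. F j)) y = cinner y y - (\<Sum>j\<in>UNIV. cinner y (F j *v y))"
      by (simp add: cquad_eq_cinner matrix_vector_mult_diff_rdistrib cinner_diff_right cinner_sum_right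
          sum_matrix_vector_mult)
    finally show "(\<Sum>j\<in>UNIV. a j) \<le> (norm y)\<^sup>2"
      by (simp add: a_def cinner_self)
  qed
  ultimately have "(norm y)\<^sup>2 \<le> (\<Sum>j\<in>UNIV. (\<bar>x $ j\<bar> * sqrt (b j))\<^sup>2)"
    using a by (intro le_sum_power2_if_le_sum_sqrt_mult) auto
  then show ?thesis
    using b unfolding y_def b_def by (simp add: power_mult_distrib)
qed

section \<open>The Hessian bound\<close>

lemma sum_exp_divdiff_le:
  fixes w :: "'a \<Rightarrow> 'a \<Rightarrow> real"
  assumes "\<And>\<alpha> \<beta>. w \<alpha> \<beta> \<ge> 0" "\<And>\<alpha> \<beta>. w \<alpha> \<beta> = w \<beta> \<alpha>"
  shows "(\<Sum>\<alpha>\<in>U. \<Sum>\<beta>\<in>U. w \<alpha> \<beta> * exp_divdiff (h \<beta>) (h \<alpha>)) \<le> (\<Sum>\<alpha>\<in>U. exp (h \<alpha>) * (\<Sum>\<beta>\<in>U. w \<alpha> \<beta>))"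
proof -
  have "2 * (\<Sum>\<alpha>\<in>U. \<Sum>\<beta>\<in>U. w \<alpha> \<beta> * exp_divdiff (h \<beta>) (h \<alpha>))
      \<le> (\<Sum>\<alpha>\<in>U. \<Sum>\<beta>\<in>U. w \<alpha> \<beta> * (exp (h \<alpha>) + exp (h \<beta>)))"
    unfolding sum_distrib_left
  proof (intro sum_mono)
    fix \<alpha> \<beta>
    have "2 * exp_divdiff (h \<beta>) (h \<alpha>) \<le> exp (h \<alpha>) + exp (h \<beta>)"
      using exp_divdiff_le_mean[of "h \<beta>" "h \<alpha>"] by simp
    then have "w \<alpha> \<beta> * (2 * exp_divdiff (h \<beta>) (h \<alpha>)) \<le> w \<alpha> \<beta> * (exp (h \<alpha>) + exp (h \<beta>))"
      by (rule mult_left_mono) (rule assms(1))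
    then show "2 * (w \<alpha> \<beta> * exp_divdiff (h \<beta>) (h \<alpha>)) \<le> w \<alpha> \<beta> * (exp (h \<alpha>) + exp (h \<beta>))"
      by (simp add: mult.left_commute)
  qed
  also have "\<dots> = (\<Sum>\<alpha>\<in>U. \<Sum>\<beta>\<in>U. w \<alpha> \<beta> * exp (h \<alpha>)) + (\<Sum>\<alpha>\<in>U. \<Sum>\<beta>\<in>U. w \<alpha> \<beta> * exp (h \<beta>))"
    by (simp add: distrib_left sum.distrib)
  also have "(\<Sum>\<alpha>\<in>U. \<Sum>\<beta>\<in>U. w \<alpha> \<beta> * exp (h \<beta>)) = (\<Sum>\<alpha>\<in>U. \<Sum>\<beta>\<in>U. w \<alpha> \<beta> * exp (h \<alpha>))"
    by (subst sum.swap) (intro sum.cong refl, metis assms(2))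
  finally have "2 * (\<Sum>\<alpha>\<in>U. \<Sum>\<beta>\<in>U. w \<alpha> \<beta> * exp_divdiff (h \<beta>) (h \<alpha>))
      \<le> 2 * (\<Sum>\<alpha>\<in>U. \<Sum>\<beta>\<in>U. w \<alpha> \<beta> * exp (h \<alpha>))" by linarith
  then have "(\<Sum>\<alpha>\<in>U. \<Sum>\<beta>\<in>U. w \<alpha> \<beta> * exp_divdiff (h \<beta>) (h \<alpha>))
      \<le> (\<Sum>\<alpha>\<in>U. \<Sum>\<beta>\<in>U. w \<alpha> \<beta> * exp (h \<alpha>))"
    by (rule mult_left_le_imp_le) simp
  then show ?thesis
    by (simp add: sum_distrib_left mult.commute)
qed

lemma inner_matrix_vector_mult_eq_sum:
  "x \<bullet> ((M::real^'k^'k) *v x) = (\<Sum>i\<in>UNIV. \<Sum>j\<in>UNIV. x $ i * M $ i $ j * x $ j)"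
  by (simp add: inner_vec_def matrix_vector_mult_def sum_distrib_left mult_ac)

lemma matrix_elem_prod_lin_comb:
  "matrix_elem_prod (lin_comb x F) (lin_comb x F) a b =
    (\<Sum>i\<in>UNIV. \<Sum>j\<in>UNIV. x $ i * x $ j * matrix_elem_prod (F j) (F i) a b)"
proof -
  define z where "z k = cinner b (F k *v a)" for k
  have "cinner b (lin_comb x F *v a) = (\<Sum>k\<in>UNIV. of_real (x $ k) * z k)"
    by (simp add: z_def lin_comb_def sum_matrix_vector_mult matrix_scaleR_vector_mult
        cinner_sum_right cinner_scaleR_right)
  then have "matrix_elem_prod (lin_comb x F) (lin_comb x F) a b =
      Re ((\<Sum>j\<in>UNIV. of_real (x $ j) * cnj (z j)) * (\<Sum>i\<in>UNIV. of_real (x $ i) * z i))"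
    by (simp add: matrix_elem_prod_def)
  also have "\<dots> = (\<Sum>j\<in>UNIV. \<Sum>i\<in>UNIV. x $ j * x $ i * Re (cnj (z j) * z i))"
    unfolding sum_product Re_sum by (intro sum.cong refl) (simp add: algebra_simps)
  finally show ?thesis
    by (subst sum.swap) (simp add: matrix_elem_prod_def z_def mult_ac)
qed

context
  fixes F :: "'k::finite \<Rightarrow> complex^'d::finite^'d" and lam :: "real^'k" and U h
  assumes F: "\<And>j. hermitian (F j)" and basis: "orthonormal_eigenbasis (lin_comb lam F) U h UNIV"
begin

lemma Lambda_mat_eq_sum_eigenbasis:
  "Lambda_mat F lam $ i $ j =
    (\<Sum>\<alpha>\<in>U. \<Sum>\<beta>\<in>U. matrix_elem_prod (F j) (F i) \<alpha> \<beta> * exp_divdiff (h \<beta>) (h \<alpha>))"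
  unfolding Lambda_mat_eq_suminf
  using sums_Re_mtrace_mult_mpow_dir_deriv[OF basis hermitian_lin_comb[OF F] F]
  by (rule sums_unique[symmetric])

lemma Delta_mat_eq_sum_eigenbasis:
  "Delta_mat F lam $ i $ j = (if i = j then (\<Sum>\<alpha>\<in>U. exp (h \<alpha>) * Re (cinner \<alpha> (F j *v \<alpha>))) else 0)"
  unfolding Delta_mat_eq Re_mtrace_mult_mexp[OF basis hermitian_lin_comb[OF F]] ..

lemma Lambda_mat_symmetric: "Lambda_mat F lam $ i $ j = Lambda_mat F lam $ j $ i"
  unfolding Lambda_mat_eq_sum_eigenbasis
  by (subst sum.swap) (simp add: matrix_elem_prod_swap[OF F F] exp_divdiff_commute)

lemma inner_Lambda_mat:
  "x \<bullet> (Lambda_mat F lam *v x) =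
    (\<Sum>\<alpha>\<in>U. \<Sum>\<beta>\<in>U. matrix_elem_prod (lin_comb x F) (lin_comb x F) \<alpha> \<beta> * exp_divdiff (h \<beta>) (h \<alpha>))"
  unfolding inner_matrix_vector_mult_eq_sum Lambda_mat_eq_sum_eigenbasis matrix_elem_prod_lin_comb
  by (simp add: sum_distrib_left sum_distrib_right mult_ac sum.swap[of _ UNIV U])

lemma inner_Delta_mat:
  "x \<bullet> (Delta_mat F lam *v x) = (\<Sum>\<alpha>\<in>U. exp (h \<alpha>) * (\<Sum>j\<in>UNIV. (x $ j)\<^sup>2 * Re (cinner \<alpha> (F j *v \<alpha>))))"
  unfolding inner_matrix_vector_mult_eq_sum Delta_mat_eq_sum_eigenbasis
  by (simp add: if_distrib if_distribR sum_distrib_left sum_distrib_right power2_eq_square mult_ac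
      sum.swap[of _ UNIV U] cong: if_cong)

end

theorem theoremC4:
  fixes F :: "'k::finite \<Rightarrow> complex^'d::finite^'d" and lam :: "real^'k"
  assumes "\<And>j. cpsd (F j)"
    and "cloewner_le (\<Sum>j\<in>UNIV. F j) (mat 1)"
  shows "rloewner_le (Lambda_mat F lam) (Delta_mat F lam)"
proof -
  have F: "hermitian (F j)" for j using assms(1) by (rule cpsd_imp_hermitian)
  then obtain U h where basis: "orthonormal_eigenbasis (lin_comb lam F) U h UNIV"
    using orthonormal_eigenbasis_exists[OF hermitian_lin_comb] by blast
  have "x \<bullet> (Lambda_mat F lam *v x) \<le> x \<bullet> (Delta_mat F lam *v x)" for x
  proof -
    let ?X = "lin_comb x F"
    have X: "hermitian ?X" using F by (rule hermitian_lin_comb)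
    have "x \<bullet> (Lambda_mat F lam *v x) \<le> (\<Sum>\<alpha>\<in>U. exp (h \<alpha>) * (\<Sum>\<beta>\<in>U. matrix_elem_prod ?X ?X \<alpha> \<beta>))"
      unfolding inner_Lambda_mat[OF F basis]
      by (intro sum_exp_divdiff_le matrix_elem_prod_swap[OF X X]) (simp add: matrix_elem_prod_self)
    also have "\<dots> = (\<Sum>\<alpha>\<in>U. exp (h \<alpha>) * (norm (?X *v \<alpha>))\<^sup>2)"
      by (simp add: matrix_elem_prod_self power2_norm_eq_sum_eigenbasis[OF basis hermitian_lin_comb[OF F]])
    also have "\<dots> \<le> (\<Sum>\<alpha>\<in>U. exp (h \<alpha>) * (\<Sum>j\<in>UNIV. (x $ j)\<^sup>2 * Re (cinner \<alpha> (F j *v \<alpha>))))"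
      by (intro sum_mono mult_left_mono power2_norm_lin_comb_mult_le assms) simp
    finally show ?thesis unfolding inner_Delta_mat[OF F basis] .
  qed
  moreover have "transpose (Delta_mat F lam - Lambda_mat F lam) = Delta_mat F lam - Lambda_mat F lam"
    using Lambda_mat_symmetric[OF F basis] by (simp add: vec_eq_iff transpose_def Delta_mat_def)
  ultimately show ?thesis
    by (simp add: rloewner_le_def rpsd_def matrix_vector_mult_diff_rdistrib inner_diff_right)
qed

end
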